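(* Let $N\ge 2$ be an integer and $\lambda>0$, $\mu>0$, $\Delta\ge 0$, $T_{cl}>0$ real ($T_{cl}=\mathbb{E}[T_{\text{cl}}]$, the expected cloud time). For each integer $c\in\{1,\dots,N\}$ let $a(c)=\lambda(\Delta+\frac{c}{N\mu})$ and $P_b(c)=\frac{a(c)^c/c!}{\sum_{j=0}^{c}a(c)^j/j!}$. For each positive divisor $c$ of $N$ (with $m=N/c$) define the average system time $$\mathbb{E}[T_{\text{sys}}(c)]=(1-P_b(c))\Big(\Delta+\frac{c}{N\mu}\Big)+P_b(c)\,T_{cl}.$$ (i) If $$T_{cl}\ge\frac{1}{\mu}\,\frac{1-\frac1N-P_b(N)+\frac{P_b(1)}{N}}{P_b(\lfloor N/2\rfloor)-P_b(N)}+\Delta,$$ then $\mathbb{E}[T_{\text{sys}}(c)]$ is minimized over the positive divisors $c$ of $N$ at $c=N$ (i.e. $m=1$). (ii) Assume $N\ge 3$. If $T_{cl}\in\big(\Delta+\frac{1}{N\mu},\,\Delta+\frac1\mu\big)$ and $\lambda\le\frac{N\mu}{(N-2)(\Delta N\mu+1)}$, then $\mathbb{E}[T_{\text{sys}}(c)]$ is minimized over the positive divisors $c$ of $N$ at $c=1$ (i.e. $m=N$).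
   Context: Model: an edge system has $N$ workers split into $c$ groups of $m=N/c$ workers each. Jobs arrive as a Poisson process of rate $\lambda$; each job is replicated to the $m$ workers of a free group, and a job finding all groups busy is blocked and executed in the cloud, taking expected time $T_{cl}$. Worker service times are shifted exponential $\mathrm{SExp}(\Delta,\mu)$ ($\Delta$ plus an exponential of rate $\mu$), so the job-computing time has mean $\Delta+\frac{1}{m\mu}=\Delta+\frac{c}{N\mu}$. Blocking is modeled by an M/G/c/c loss queue, giving the Erlang B blocking probability $P_b(c)$ with offered load $a(c)=\lambda\,\mathbb{E}[T_{\text{job}}]$. The average system time is $(1-P_b)\mathbb{E}[T_{\text{job}}]+P_b\,\mathbb{E}[T_{\text{cl}}]$. *)

theory Defs
  imports Complex_Main
begin

definition offered_load :: "nat \<Rightarrow> real \<Rightarrow> real \<Rightarrow> real \<Rightarrow> nat \<Rightarrow> real" where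
  "offered_load N lam mu Delta c = lam * (Delta + real c / (real N * mu))"

definition erlangB :: "real \<Rightarrow> nat \<Rightarrow> real" where
  "erlangB a c = (a ^ c / fact c) / (\<Sum>j = 0..c. a ^ j / fact j)"

definition Pb :: "nat \<Rightarrow> real \<Rightarrow> real \<Rightarrow> real \<Rightarrow> nat \<Rightarrow> real" where
  "Pb N lam mu Delta c = erlangB (offered_load N lam mu Delta c) c"

definition Tsys :: "nat \<Rightarrow> real \<Rightarrow> real \<Rightarrow> real \<Rightarrow> real \<Rightarrow> nat \<Rightarrow> real" where
  "Tsys N lam mu Delta Tcl c =
     (1 - Pb N lam mu Delta c) * (Delta + real c / (real N * mu)) + Pb N lam mu Delta c * Tcl"

end

(*
  Writing I n a for the reciprocal of the Erlang B formula, I satisfies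
  I (n + 1) a = 1 + (n + 1) / a * I n a. Hence I n a is antitone in a, and at a fixed
  load per server rho it grows strictly with the number of servers:
  I n (rho n) < I (n + 1) (rho (n + 1)). As the offered load a(c) has nonincreasing load
  per server a(c)/c, the blocking probability P_b(c) is strictly decreasing in c.

  (i) T(c) - T(N) = (P_b(c) - P_b(N)) (T_cl - Delta) - ((1 - P_b(N)) - (1 - P_b(c)) c/N)/mu.
  A proper divisor c of N is at most N div 2, so P_b(c) - P_b(N) >= P_b(N div 2) - P_b(N) > 0,
  and (1 - P_b(c)) c >= 1 - P_b(1); the threshold on T_cl then makes the difference nonnegative.

  (ii) T(c) is a convex combination of Delta + c/(N mu) and T_cl, so it is at least their
  minimum. The bound on lambda is equivalent to (N - 1) P_b(1) <= 1, which keeps T(1) below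
  both T_cl and Delta + 2/(N mu).
*)
theory Submission
  imports Defs
begin

definition inv_erlangB :: "nat \<Rightarrow> real \<Rightarrow> real" where
  "inv_erlangB n a = (\<Sum>j = 0..n. a ^ j / fact j) * fact n / a ^ n"

lemma inv_erlangB_0 [simp]: "inv_erlangB 0 a = 1"
  by (simp add: inv_erlangB_def)

lemma inv_erlangB_Suc:
  assumes "a > 0"
  shows "inv_erlangB (Suc n) a = 1 + Suc n / a * inv_erlangB n a"
proof -
  have "inv_erlangB (Suc n) a
      = ((\<Sum>j = 0..n. a ^ j / fact j) + a ^ Suc n / fact (Suc n)) * fact (Suc n) / a ^ Suc n"
    by (simp add: inv_erlangB_def)
  also have "\<dots> = 1 + Suc n / a * inv_erlangB n a"
    using assms by (simp add: inv_erlangB_def field_simps fact_Suc del: of_nat_Suc)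
  finally show ?thesis .
qed

lemma inv_erlangB_ge_1:
  assumes "a > 0"
  shows "inv_erlangB n a \<ge> 1"
  by (induction n) (use assms in \<open>simp_all add: inv_erlangB_Suc\<close>)

lemma inv_erlangB_antimono:
  assumes "0 < a" "a \<le> b"
  shows "inv_erlangB n b \<le> inv_erlangB n a"
proof (induction n)
  case (Suc n)
  have "b > 0" using assms by simp
  have "Suc n / b \<le> Suc n / a"
    using assms by (simp add: frac_le)
  with Suc assms \<open>b > 0\<close> have "Suc n / b * inv_erlangB n b \<le> Suc n / a * inv_erlangB n a"
    by (intro mult_mono) (auto intro: order_trans[OF zero_le_one inv_erlangB_ge_1])
  then show ?case
    using assms \<open>b > 0\<close> by (simp add: inv_erlangB_Suc)
qed simp

lemma inv_erlangB_Suc_per_server: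
  fixes rho :: real
  assumes "rho > 0"
  shows "inv_erlangB (Suc n) (rho * Suc n) = 1 + inv_erlangB n (rho * Suc n) / rho"
  using assms by (simp add: inv_erlangB_Suc field_simps del: of_nat_Suc)

lemma inv_erlangB_less_at_fixed_load_per_server:
  fixes rho :: real
  assumes "rho > 0" "n \<ge> 1"
  shows "inv_erlangB n (rho * n) < inv_erlangB (Suc n) (rho * Suc n)"
  using assms(2,1)
proof (induction n arbitrary: rho rule: dec_induct)
  case base
  then show ?case
    by (simp add: inv_erlangB_Suc_per_server numeral_2_eq_2 del: of_nat_Suc)
       (simp add: inv_erlangB_Suc field_simps)
next
  case (step n)
  txt \<open>By the recursion the claim reduces to I n (rho (n + 1)) < I (n + 1) (rho (n + 2)),
    which is the induction hypothesis at the slightly smaller load rho' n.\<close>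
  define rho' where "rho' = rho * Suc (Suc n) / Suc n"
  have "rho' > 0"
    using step.prems by (simp add: rho'_def)
  have "rho' * n = rho * (n * (n + 2) / (n + 1))"
    by (simp add: rho'_def algebra_simps)
  also have "\<dots> \<le> rho * (n + 1)"
    using step.prems by (intro mult_left_mono) (simp_all add: divide_le_eq algebra_simps)
  finally have "rho' * n \<le> rho * Suc n"
    by simp
  then have "inv_erlangB n (rho * Suc n) \<le> inv_erlangB n (rho' * n)"
    using \<open>rho' > 0\<close> step.hyps(1) by (intro inv_erlangB_antimono) auto
  also have "\<dots> < inv_erlangB (Suc n) (rho' * Suc n)"
    using step.IH \<open>rho' > 0\<close> .
  also have "rho' * Suc n = rho * Suc (Suc n)"
    by (simp add: rho'_def)
  finally have "inv_erlangB n (rho * Suc n) < inv_erlangB (Suc n) (rho * Suc (Suc n))" .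
  then show ?case
    using step.prems by (simp only: inv_erlangB_Suc_per_server) (simp add: divide_strict_right_mono)
qed

lemma erlangB_eq_inverse:
  assumes "a > 0"
  shows "erlangB a n = 1 / inv_erlangB n a"
proof -
  have "(\<Sum>j = 0..n. a ^ j / fact j) > 0"
    using assms by (intro sum_pos2[where i = 0]) auto
  with assms show ?thesis
    by (simp add: erlangB_def inv_erlangB_def field_simps)
qed

lemma erlangB_pos: "a > 0 \<Longrightarrow> erlangB a n > 0"
  using inv_erlangB_ge_1[of a n] by (simp add: erlangB_eq_inverse)

lemma erlangB_le_1: "a > 0 \<Longrightarrow> erlangB a n \<le> 1"
  using inv_erlangB_ge_1[of a n] by (simp add: erlangB_eq_inverse)

lemma erlangB_strict_antimono:
  fixes a :: "nat \<Rightarrow> real"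
  assumes pos: "\<And>c. c \<ge> 1 \<Longrightarrow> a c > 0"
    and load_per_server: "\<And>c. c \<ge> 1 \<Longrightarrow> a (Suc c) / Suc c \<le> a c / c"
    and "1 \<le> m" "m < n"
  shows "erlangB (a n) n < erlangB (a m) m"
proof -
  have increase: "inv_erlangB c (a c) < inv_erlangB (Suc c) (a (Suc c))" if "c \<ge> 1" for c
  proof -
    define rho where "rho = a c / c"
    have "rho > 0"
      using pos that by (simp add: rho_def)
    have "inv_erlangB c (a c) = inv_erlangB c (rho * c)"
      using that by (simp add: rho_def)
    also have "\<dots> < inv_erlangB (Suc c) (rho * Suc c)"
      using \<open>rho > 0\<close> that by (rule inv_erlangB_less_at_fixed_load_per_server)
    also have "\<dots> \<le> inv_erlangB (Suc c) (a (Suc c))"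
      using pos load_per_server[OF that] by (intro inv_erlangB_antimono) (simp_all add: rho_def divide_le_eq)
    finally show ?thesis .
  qed
  have "inv_erlangB m (a m) < inv_erlangB n (a n)"
    using Suc_leI[OF \<open>m < n\<close>]
  proof (induction n rule: dec_induct)
    case base
    show ?case using increase \<open>1 \<le> m\<close> .
  next
    case (step n)
    with increase[of n] \<open>1 \<le> m\<close> show ?case by simp
  qed
  then show ?thesis
    using pos[of m] pos[of n] assms(3,4) inv_erlangB_ge_1[of "a m" m]
    by (simp add: erlangB_eq_inverse frac_less2)
qed

lemma proper_divisor_le_half:
  fixes c N :: nat
  assumes "c dvd N" "c \<noteq> N" "N > 0"
  shows "c \<le> N div 2"
proof -
  obtain k where "N = c * k"
    using assms(1) ..
  with assms(2,3) have "k \<ge> 2"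
    by (cases k) auto
  with \<open>N = c * k\<close> have "c * 2 \<le> N"
    by simp
  then show ?thesis
    by simp
qed

locale edge_system =
  fixes N :: nat and lam mu Delta Tcl :: real
  assumes N_pos: "N > 0" and lam_pos: "lam > 0" and mu_pos: "mu > 0" and Delta_nonneg: "Delta \<ge> 0"
begin

abbreviation P :: "nat \<Rightarrow> real" where
  "P \<equiv> Pb N lam mu Delta"

abbreviation T :: "nat \<Rightarrow> real" where
  "T \<equiv> Tsys N lam mu Delta Tcl"

lemma offered_load_pos: "c > 0 \<Longrightarrow> offered_load N lam mu Delta c > 0"
  using N_pos lam_pos mu_pos Delta_nonneg by (simp add: offered_load_def add_nonneg_pos)

lemma offered_load_per_server_antimono:
  assumes "c \<ge> 1"
  shows "offered_load N lam mu Delta (Suc c) / Suc c \<le> offered_load N lam mu Delta c / c"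
proof -
  have per_server: "offered_load N lam mu Delta k / k = lam * Delta / k + lam / (N * mu)" if "k \<ge> 1" for k
    using that by (simp add: offered_load_def field_simps)
  have "lam * Delta / Suc c \<le> lam * Delta / c"
    using assms lam_pos Delta_nonneg by (intro divide_left_mono) auto
  then show ?thesis
    using assms by (simp only: per_server[OF assms] per_server[of "Suc c"])
qed

lemma Pb_strict_antimono: "1 \<le> m \<Longrightarrow> m < n \<Longrightarrow> P n < P m"
  unfolding Pb_def
  by (rule erlangB_strict_antimono) (auto intro: offered_load_pos offered_load_per_server_antimono simp del: of_nat_Suc)

lemma Pb_antimono: "1 \<le> m \<Longrightarrow> m \<le> n \<Longrightarrow> P n \<le> P m"
  using Pb_strict_antimono[of m n] by (cases "m = n") auto

lemma Pb_pos: "c > 0 \<Longrightarrow> P c > 0"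
  by (simp add: Pb_def erlangB_pos offered_load_pos)

lemma Pb_le_1: "c > 0 \<Longrightarrow> P c \<le> 1"
  by (simp add: Pb_def erlangB_le_1 offered_load_pos)

lemma Tsys_minus_Tsys_N:
  "T c - T N = (P c - P N) * (Tcl - Delta) - ((1 - P N) - (1 - P c) * c / N) / mu"
  using N_pos mu_pos by (simp add: Tsys_def field_simps)

lemma Tsys_min_at_no_replication:
  assumes "N \<ge> 2" "1 \<le> c" "c \<le> N div 2"
    and threshold: "(1 / mu) * ((1 - 1 / N - P N + P 1 / N) / (P (N div 2) - P N)) + Delta \<le> Tcl"
  shows "T N \<le> T c"
proof -
  define num where "num = 1 - 1 / N - P N + P 1 / N"
  define den where "den = P (N div 2) - P N"
  have "den > 0"
    using assms(1) Pb_strict_antimono[of "N div 2" N] by (simp add: den_def)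
  have "den \<le> P c - P N"
    using Pb_antimono[OF assms(2,3)] by (simp add: den_def)
  have "num = (1 - P N) * (1 - 1 / N) + (P 1 - P N) / N"
    using N_pos by (simp add: num_def field_simps)
  moreover have "P N \<le> 1" "P N \<le> P 1"
    using N_pos Pb_le_1 Pb_antimono[of 1 N] by auto
  ultimately have "num \<ge> 0"
    using N_pos by simp
  have "num / mu / den \<le> Tcl - Delta"
    using threshold by (simp add: num_def den_def)
  then have "num / mu \<le> den * (Tcl - Delta)"
    using \<open>den > 0\<close> by (simp only: pos_divide_le_eq mult.commute)
  moreover have "Tcl - Delta \<ge> 0"
    using \<open>num / mu / den \<le> Tcl - Delta\<close> \<open>num \<ge> 0\<close> \<open>den > 0\<close> mu_pos
    by (meson divide_nonneg_pos order_trans)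
  ultimately have "num / mu \<le> (P c - P N) * (Tcl - Delta)"
    using \<open>den \<le> P c - P N\<close> by (meson mult_right_mono order_trans)
  moreover have "((1 - P N) - (1 - P c) * c / N) / mu \<le> num / mu"
  proof -
    have "1 - P 1 \<le> 1 - P c"
      using Pb_antimono[of 1 c] assms(2) by simp
    also have "\<dots> \<le> (1 - P c) * c"
      using Pb_le_1[of c] assms(2) by (simp add: mult_le_cancel_left1)
    finally have "(1 - P 1) / N \<le> (1 - P c) * c / N"
      by (simp add: divide_right_mono)
    then show ?thesis
      using mu_pos by (intro divide_right_mono) (simp_all add: num_def diff_divide_distrib)
  qed
  ultimately show ?thesis
    using Tsys_minus_Tsys_N[of c] by linarith
qed

lemma Pb_1_mult_le_1:
  assumes "N > 2" and lam_bound: "lam \<le> N * mu / ((real N - 2) * (Delta * N * mu + 1))"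
  shows "(real N - 1) * P 1 \<le> 1"
proof -
  define a where "a = offered_load N lam mu Delta 1"
  have "a > 0"
    by (simp add: a_def offered_load_pos)
  have "P 1 = a / (1 + a)"
    by (simp add: Pb_def erlangB_def a_def)
  have "(real N - 2) * (Delta * N * mu + 1) > 0"
    using assms(1) mu_pos Delta_nonneg by (simp add: add_nonneg_pos)
  with lam_bound have "lam * ((real N - 2) * (Delta * N * mu + 1)) \<le> N * mu"
    by (simp add: pos_le_divide_eq)
  moreover have "(real N - 2) * a = lam * ((real N - 2) * (Delta * N * mu + 1)) / (N * mu)"
    using N_pos mu_pos by (simp add: a_def offered_load_def field_simps)
  ultimately have "(real N - 2) * a \<le> 1"
    using N_pos mu_pos by (simp add: pos_divide_le_eq)
  with \<open>a > 0\<close> show ?thesis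
    unfolding \<open>P 1 = a / (1 + a)\<close> by (simp add: field_simps)
qed

lemma min_le_Tsys:
  assumes "c > 0"
  shows "min (Delta + c / (N * mu)) Tcl \<le> T c"
proof -
  let ?s = "Delta + c / (N * mu)"
  have "min ?s Tcl = (1 - P c) * min ?s Tcl + P c * min ?s Tcl"
    by (simp add: algebra_simps)
  also have "\<dots> \<le> (1 - P c) * ?s + P c * Tcl"
    using Pb_pos[OF assms] Pb_le_1[OF assms] by (intro add_mono mult_left_mono) auto
  finally show ?thesis
    by (simp add: Tsys_def)
qed

lemma Tsys_1_le_min:
  fixes c :: nat
  assumes "N > 2" "lam \<le> N * mu / ((real N - 2) * (Delta * N * mu + 1))"
    and Tcl_range: "Delta + 1 / (N * mu) < Tcl" "Tcl < Delta + 1 / mu"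
    and "c \<ge> 2"
  shows "T 1 \<le> min (Delta + c / (N * mu)) Tcl"
proof -
  define s where "s = Delta + 1 / (N * mu)"
  have T1: "T 1 = s + P 1 * (Tcl - s)"
    by (simp add: Tsys_def s_def algebra_simps)
  have "P 1 * (Tcl - s) \<le> Tcl - s"
    using Pb_le_1[of 1] Tcl_range(1) by (simp add: s_def mult_left_le_one_le)
  moreover have "P 1 * (Tcl - s) \<le> 1 / (N * mu)"
  proof -
    have "(real N - 1) / (N * mu) = 1 / mu - 1 / (N * mu)"
      using N_pos mu_pos by (simp add: field_simps)
    then have "Tcl - s \<le> (real N - 1) / (N * mu)"
      using Tcl_range(2) by (simp add: s_def)
    then have "P 1 * (Tcl - s) \<le> P 1 * ((real N - 1) / (N * mu))"
      using Pb_pos[of 1] by (intro mult_left_mono) auto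
    also have "\<dots> = (real N - 1) * P 1 / (N * mu)"
      by (simp add: mult.commute)
    also have "\<dots> \<le> 1 / (N * mu)"
      using Pb_1_mult_le_1[OF assms(1,2)] N_pos mu_pos by (simp add: divide_right_mono)
    finally show ?thesis .
  qed
  moreover have "s + 1 / (N * mu) \<le> Delta + c / (N * mu)"
  proof -
    have "2 / (N * mu) \<le> c / (N * mu)"
      using assms(5) N_pos mu_pos by (intro divide_right_mono) auto
    then show ?thesis
      by (simp add: s_def mult.commute)
  qed
  ultimately show ?thesis
    unfolding T1 by simp
qed

lemma Tsys_min_at_full_replication:
  assumes "N > 2" "lam \<le> N * mu / ((real N - 2) * (Delta * N * mu + 1))"
    and "Delta + 1 / (N * mu) < Tcl" "Tcl < Delta + 1 / mu"
    and "c \<ge> 1"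
  shows "T 1 \<le> T c"
proof (cases "c = 1")
  case False
  then have "T 1 \<le> min (Delta + c / (N * mu)) Tcl"
    using assms by (intro Tsys_1_le_min) auto
  also have "\<dots> \<le> T c"
    using assms(5) by (intro min_le_Tsys) simp
  finally show ?thesis .
qed simp

end

theorem theorem2:
  fixes N :: nat and lam mu Delta Tcl :: real
  assumes "N \<ge> 2" and "lam > 0" and "mu > 0" and "Delta \<ge> 0" and "Tcl > 0"
  shows "(Tcl \<ge> (1 / mu) *
            ((1 - 1 / real N - Pb N lam mu Delta N + Pb N lam mu Delta 1 / real N)
             / (Pb N lam mu Delta (N div 2) - Pb N lam mu Delta N)) + Delta
          \<longrightarrow> (\<forall>c. c > 0 \<and> c dvd N \<longrightarrow> Tsys N lam mu Delta Tcl N \<le> Tsys N lam mu Delta Tcl c))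
       \<and> (N \<ge> 3 \<and> Delta + 1 / (real N * mu) < Tcl \<and> Tcl < Delta + 1 / mu
          \<and> lam \<le> real N * mu / ((real N - 2) * (Delta * real N * mu + 1))
          \<longrightarrow> (\<forall>c. c > 0 \<and> c dvd N \<longrightarrow> Tsys N lam mu Delta Tcl 1 \<le> Tsys N lam mu Delta Tcl c))"
proof -
  have "N > 0"
    using assms(1) by simp
  interpret edge_system N lam mu Delta Tcl
    using \<open>N > 0\<close> assms(2-4) by unfold_locales
  show ?thesis (is "(?threshold \<longrightarrow> _) \<and> (?regime \<longrightarrow> _)")
  proof (intro conjI impI allI)
    fix c :: nat
    assume ?threshold and c: "c > 0 \<and> c dvd N"
    show "Tsys N lam mu Delta Tcl N \<le> Tsys N lam mu Delta Tcl c"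
    proof (cases "c = N")
      case False
      with c \<open>N > 0\<close> have "c \<le> N div 2"
        by (intro proper_divisor_le_half) auto
      with c \<open>?threshold\<close> show ?thesis
        by (intro Tsys_min_at_no_replication[OF assms(1)]) auto
    qed simp
  next
    fix c :: nat
    assume ?regime "c > 0 \<and> c dvd N"
    then show "Tsys N lam mu Delta Tcl 1 \<le> Tsys N lam mu Delta Tcl c"
      by (intro Tsys_min_at_full_replication) auto
  qed
qed

end
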